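(* Let $a,b,c\in\mathbb{R}$ and $P_2:\ell_\infty^2(\mathbb{C})\to\mathbb{C}$, $P_2(z_1,z_2)=az_1^2+bz_2^2+cz_1z_2$. Then $$\|P_2\|=\begin{cases}|a+b|+|c| & \text{if } ab\ge0 \text{ or } |c(a+b)|>4|ab|,\\[2pt] (|a|+|b|)\sqrt{1+\dfrac{c^2}{4|ab|}} & \text{otherwise.}\end{cases}$$
   Context: $\ell_\infty^2(\mathbb{C})$ is $\mathbb{C}^2$ with the sup norm, and $\|P_2\|=\sup\{|P_2(z_1,z_2)|:|z_1|\le1,|z_2|\le1\}$. *)

theory Defs
  imports "HOL-Analysis.Analysis"
begin

definition P2 :: "real \<Rightarrow> real \<Rightarrow> real \<Rightarrow> complex \<Rightarrow> complex \<Rightarrow> complex" where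
  "P2 a b c z1 z2 = of_real a * z1^2 + of_real b * z2^2 + of_real c * z1 * z2"

definition poly_norm2 :: "(complex \<Rightarrow> complex \<Rightarrow> complex) \<Rightarrow> real" where
  "poly_norm2 P = (SUP z \<in> {z :: complex \<times> complex. norm (fst z) \<le> 1 \<and> norm (snd z) \<le> 1}.
                     norm (P (fst z) (snd z)))"

end

theory Submission
  imports Defs "HOL-Complex_Analysis.Conformal_Mappings"
begin

(* Since P2 is homogeneous of degree 2, for |z1| <= |z2| we have
   P2(z1,z2) = z2^2 q(z1/z2) with q(w) = a w^2 + c w + b, and the case |z2| < |z1| is the
   same after swapping a and b (the claimed value is symmetric in a, b).  By the maximum
   modulus principle, max |q| over the closed unit disk is max |q| over the unit circle.
   On the circle, |q(v)|^2 depends only on x = Re v; it is the real quadratic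
     g(x) = 4ab x^2 + 2c(a+b) x + c^2 + (a-b)^2,
   so the whole problem reduces to maximizing g over [-1,1].  If ab >= 0, or if the vertex
   of g lies outside [-1,1] (|c(a+b)| > 4|ab|), the maximum is at x = +-1 and equals
   (|a+b| + |c|)^2; otherwise it is attained at the vertex x = c(a+b)/(4|ab|), where an
   exact "completing the square" identity gives the value (|a|+|b|)^2 (1 + c^2/(4|ab|)). *)

definition norm_formula :: "real \<Rightarrow> real \<Rightarrow> real \<Rightarrow> real" where
  "norm_formula a b c = (if a * b \<ge> 0 \<or> \<bar>c * (a + b)\<bar> > 4 * \<bar>a * b\<bar>
     then \<bar>a + b\<bar> + \<bar>c\<bar>
     else (\<bar>a\<bar> + \<bar>b\<bar>) * sqrt (1 + c^2 / (4 * \<bar>a * b\<bar>)))"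

lemma norm_formula_outer:
  "a * b \<ge> 0 \<or> \<bar>c * (a + b)\<bar> > 4 * \<bar>a * b\<bar> \<Longrightarrow> norm_formula a b c = \<bar>a + b\<bar> + \<bar>c\<bar>"
  unfolding norm_formula_def by (rule if_P)

lemma norm_formula_inner:
  "\<not> (a * b \<ge> 0 \<or> \<bar>c * (a + b)\<bar> > 4 * \<bar>a * b\<bar>) \<Longrightarrow>
   norm_formula a b c = (\<bar>a\<bar> + \<bar>b\<bar>) * sqrt (1 + c^2 / (4 * \<bar>a * b\<bar>))"
  unfolding norm_formula_def by (rule if_not_P)

lemma norm_formula_nonneg: "norm_formula a b c \<ge> 0"
proof -
  have "0 \<le> (\<bar>a\<bar> + \<bar>b\<bar>) * sqrt (1 + c^2 / (4 * \<bar>a * b\<bar>))"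
    by (intro mult_nonneg_nonneg real_sqrt_ge_zero add_nonneg_nonneg divide_nonneg_nonneg) auto
  then show ?thesis unfolding norm_formula_def by (simp only: if_split) (intro conjI impI; simp_all)
qed

(* The formula is symmetric in a and b, matching the symmetry z1 <-> z2 of the bidisk. *)
lemma norm_formula_swap: "norm_formula b a c = norm_formula a b c"
proof -
  have "b * a = a * b" "b + a = a + b" "\<bar>b\<bar> + \<bar>a\<bar> = \<bar>a\<bar> + \<bar>b\<bar>" by simp_all
  then show ?thesis unfolding norm_formula_def by (simp only:)
qed

(* g(x) = |a v^2 + c v + b|^2 for a point v of the unit circle with Re v = x. *)
definition circle_profile :: "real \<Rightarrow> real \<Rightarrow> real \<Rightarrow> real \<Rightarrow> real" where
  "circle_profile a b c x = 4*a*b*x^2 + 2*c*(a+b)*x + c^2 + (a-b)^2"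

lemma norm_quadratic_on_circle:
  fixes a b c :: real and v :: complex
  assumes "cmod v = 1"
  shows "(cmod (of_real a * v^2 + of_real c * v + of_real b))^2 = circle_profile a b c (Re v)"
proof -
  have unit: "(Im v)^2 = 1 - (Re v)^2"
    using assms cmod_power2[of v] by simp
  have "of_real a * v^2 + of_real c * v + of_real b
      = Complex (a*((Re v)^2 - (Im v)^2) + c * Re v + b) (Im v * (2*a*Re v + c))"
    by (simp add: complex_eq_iff power2_eq_square algebra_simps)
  then have "(cmod (of_real a * v^2 + of_real c * v + of_real b))^2
      = (a*((Re v)^2 - (Im v)^2) + c * Re v + b)^2 + (Im v)^2 * (2*a*Re v + c)^2"
    by (simp add: cmod_power2 power_mult_distrib)
  also have "\<dots> = circle_profile a b c (Re v)"
    unfolding unit circle_profile_def by (simp add: power2_eq_square algebra_simps)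
  finally show ?thesis .
qed

(* Value of g at the endpoint x = +-1 chosen so that c(a+b) x = |c(a+b)|. *)
lemma circle_profile_endpoint:
  fixes a b c :: real
  defines "x \<equiv> if c * (a + b) \<ge> 0 then 1 else -1 :: real"
  shows "circle_profile a b c x = (\<bar>a+b\<bar> + \<bar>c\<bar>)^2"
proof -
  have "x^2 = 1" "c * (a + b) * x = \<bar>c\<bar> * \<bar>a + b\<bar>"
    by (auto simp: x_def abs_mult[symmetric])
  then show ?thesis unfolding circle_profile_def
    by (simp add: power2_sum power2_eq_square algebra_simps)
qed

(* If ab >= 0 then g is convex, and if |c(a+b)| > 4|ab| its linear term dominates; in both
   cases g is bounded on [-1,1] by its value at the better endpoint. *)
lemma circle_profile_le_endpoints:
  assumes "\<bar>x\<bar> \<le> 1" and "a * b \<ge> 0 \<or> \<bar>c * (a + b)\<bar> > 4 * \<bar>a * b\<bar>"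
  shows "circle_profile a b c x \<le> (\<bar>a+b\<bar> + \<bar>c\<bar>)^2"
proof -
  define K where "K = c * (a + b)"
  have x2: "x^2 = \<bar>x\<bar>^2" "\<bar>x\<bar>^2 \<le> 1"
    using assms(1) by (auto simp: abs_le_square_iff[of x 1, simplified])
  have linear: "K * x \<le> \<bar>K\<bar> * \<bar>x\<bar>"
    by (metis abs_ge_self abs_mult)
  have "2 * K * x - 4 * a * b * (1 - x^2) \<le> 2 * \<bar>K\<bar>"
    using assms(2)
  proof (elim disjE)
    assume "a * b \<ge> 0"
    then have "4 * a * b * (1 - x^2) \<ge> 0" using x2 by simp
    moreover have "\<bar>K\<bar> * \<bar>x\<bar> \<le> \<bar>K\<bar>" using assms(1) by (simp add: mult_left_le)
    ultimately show ?thesis using linear by linarith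
  next
    assume large: "\<bar>c * (a + b)\<bar> > 4 * \<bar>a * b\<bar>"
    have "- 4 * a * b * (1 - x^2) \<le> 4 * \<bar>a * b\<bar> * (1 - x^2)"
      using x2 by (intro mult_right_mono) auto
    also have "\<dots> = 4 * \<bar>a * b\<bar> * ((1 - \<bar>x\<bar>) * (1 + \<bar>x\<bar>))"
      using x2(1) by (simp add: power2_eq_square algebra_simps)
    also have "\<dots> \<le> 4 * \<bar>a * b\<bar> * ((1 - \<bar>x\<bar>) * 2)"
      using assms(1) by (intro mult_left_mono) auto
    also have "\<dots> = (8 * \<bar>a * b\<bar>) * (1 - \<bar>x\<bar>)" by simp
    also have "\<dots> \<le> (2 * \<bar>K\<bar>) * (1 - \<bar>x\<bar>)"
      using large assms(1) unfolding K_def by (intro mult_right_mono) auto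
    finally show ?thesis using linear by (simp add: algebra_simps)
  qed
  moreover have "(\<bar>a+b\<bar> + \<bar>c\<bar>)^2 = (a+b)^2 + c^2 + 2 * \<bar>K\<bar>"
    unfolding K_def by (simp add: power2_sum abs_mult)
  ultimately show ?thesis
    unfolding circle_profile_def K_def by (simp add: power2_eq_square algebra_simps)
qed

(* For ab < 0, completing the square: the gap between the vertex value and g(x) is a perfect
   square, vanishing exactly at the vertex x = c(a+b)/(4|ab|). *)
lemma circle_profile_tangent:
  assumes "a * b < 0"
  shows "4*\<bar>a*b\<bar> * (((\<bar>a\<bar> + \<bar>b\<bar>) * sqrt (1 + c^2 / (4 * \<bar>a * b\<bar>)))^2 - circle_profile a b c x)
       = (c*(a+b) - 4*\<bar>a*b\<bar>*x)^2"
proof -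
  define m where "m = \<bar>a*b\<bar>"
  have m: "m = - (a*b)" "m > 0" "a \<noteq> 0" "b \<noteq> 0" using assms by (auto simp: m_def)
  have sum_sq: "(\<bar>a\<bar> + \<bar>b\<bar>)^2 = (a-b)^2"
    using assms by (auto simp: power2_eq_square abs_if algebra_simps mult_less_0_iff)
  have root_sq: "(sqrt (1 + c^2 / (4 * m)))^2 = 1 + c^2 / (4 * m)"
    using m(2) by (intro real_sqrt_pow2) (simp add: add_nonneg_nonneg)
  have "4*m * ((a-b)^2 * (1 + c^2 / (4 * m)) - circle_profile a b c x) = (c*(a+b) - 4*m*x)^2"
    unfolding circle_profile_def m(1) using m(2-) unfolding m(1)
    by (simp add: field_simps power2_eq_square)
  then show ?thesis unfolding m_def[symmetric] power_mult_distrib sum_sq root_sq .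
qed

lemma circle_profile_le_norm_formula:
  assumes "\<bar>x\<bar> \<le> 1"
  shows "circle_profile a b c x \<le> (norm_formula a b c)^2"
proof (cases "a * b \<ge> 0 \<or> \<bar>c * (a + b)\<bar> > 4 * \<bar>a * b\<bar>")
  case True
  then show ?thesis using circle_profile_le_endpoints[OF assms] by (simp only: norm_formula_outer)
next
  case False
  then have ab: "a * b < 0" by simp
  have "0 \<le> 4*\<bar>a*b\<bar> * ((norm_formula a b c)^2 - circle_profile a b c x)"
    unfolding norm_formula_inner[OF False] circle_profile_tangent[OF ab] by simp
  moreover have "4*\<bar>a*b\<bar> > 0" using ab by simp
  ultimately show ?thesis by (simp add: zero_le_mult_iff)
qed

lemma circle_profile_attains_norm_formula:
  obtains x where "\<bar>x\<bar> \<le> 1" "circle_profile a b c x = (norm_formula a b c)^2"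
proof (cases "a * b \<ge> 0 \<or> \<bar>c * (a + b)\<bar> > 4 * \<bar>a * b\<bar>")
  case True
  show ?thesis
    by (rule that[of "if c * (a + b) \<ge> 0 then 1 else -1"])
       (simp_all only: circle_profile_endpoint norm_formula_outer[OF True], simp)
next
  case False
  then have ab: "a * b < 0" by simp
  define x where "x = c * (a + b) / (4 * \<bar>a * b\<bar>)"
  have "\<bar>x\<bar> = \<bar>c * (a + b)\<bar> / (4 * \<bar>a * b\<bar>)"
    unfolding x_def abs_divide by simp
  also have "\<dots> \<le> 1"
    using False ab by (intro divide_le_eq_1_pos[THEN iffD2]) auto
  finally have "\<bar>x\<bar> \<le> 1" .
  moreover have "4 * \<bar>a * b\<bar> \<noteq> 0" using ab by auto
  then have "c * (a + b) - 4 * \<bar>a * b\<bar> * x = 0"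
    unfolding x_def by simp
  then have "4*\<bar>a*b\<bar> * ((norm_formula a b c)^2 - circle_profile a b c x) = 0"
    unfolding norm_formula_inner[OF False] circle_profile_tangent[OF ab] by simp
  then have "circle_profile a b c x = (norm_formula a b c)^2"
    using ab by auto
  ultimately show ?thesis by (rule that)
qed

lemma unit_with_real_part:
  fixes x :: real assumes "\<bar>x\<bar> \<le> 1"
  obtains v :: complex where "cmod v = 1" "Re v = x"
proof
  define v where "v = Complex x (sqrt (1 - x^2))"
  have "x^2 \<le> 1" using assms abs_le_square_iff[of x 1] by simp
  then have "(cmod v)^2 = 1" by (simp add: v_def cmod_power2)
  then show "cmod v = 1" using norm_ge_zero[of v] by (auto simp: power2_eq_1_iff)
  show "Re v = x" by (simp add: v_def)
qed

lemma bound_on_disk_from_circle: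
  fixes f :: "complex \<Rightarrow> complex"
  assumes "f holomorphic_on UNIV" and "\<And>v. cmod v = 1 \<Longrightarrow> cmod (f v) \<le> B" and "cmod w \<le> 1"
  shows "cmod (f w) \<le> B"
proof (rule maximum_modulus_frontier[of f "cball 0 1"])
  show "f holomorphic_on interior (cball 0 1)" "continuous_on (closure (cball 0 1)) f"
    using assms(1) by (auto intro: holomorphic_on_subset holomorphic_on_imp_continuous_on)
qed (use assms in auto)

lemma quadratic_le_norm_formula_on_disk:
  fixes w :: complex assumes "cmod w \<le> 1"
  shows "cmod (of_real a * w^2 + of_real c * w + of_real b) \<le> norm_formula a b c"
proof (rule bound_on_disk_from_circle[OF _ _ assms])
  show "(\<lambda>z. of_real a * z^2 + of_real c * z + of_real b) holomorphic_on UNIV"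
    by (intro holomorphic_intros)
  fix v :: complex assume v: "cmod v = 1"
  have "(cmod (of_real a * v^2 + of_real c * v + of_real b))^2 \<le> (norm_formula a b c)^2"
    unfolding norm_quadratic_on_circle[OF v]
    using abs_Re_le_cmod[of v] v by (intro circle_profile_le_norm_formula) simp
  then show "cmod (of_real a * v^2 + of_real c * v + of_real b) \<le> norm_formula a b c"
    using norm_formula_nonneg by (rule power2_le_imp_le)
qed

lemma P2_dehomogenize:
  assumes "z2 \<noteq> 0"
  shows "P2 a b c z1 z2 = z2^2 * (of_real a * (z1/z2)^2 + of_real c * (z1/z2) + of_real b)"
  using assms by (simp add: P2_def field_simps power2_eq_square)

lemma P2_swap: "P2 a b c z1 z2 = P2 b a c z2 z1"
  by (simp add: P2_def algebra_simps)

lemma P2_le_norm_formula_half: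
  assumes "cmod z1 \<le> cmod z2" "cmod z2 \<le> 1"
  shows "cmod (P2 a b c z1 z2) \<le> norm_formula a b c"
proof (cases "z2 = 0")
  case True
  then show ?thesis using assms norm_formula_nonneg by (simp add: P2_def)
next
  case False
  have "cmod (z1 / z2) \<le> 1" using assms False by (simp add: norm_divide divide_le_eq_1)
  then have "cmod (P2 a b c z1 z2) \<le> (cmod z2)^2 * norm_formula a b c"
    unfolding P2_dehomogenize[OF False] norm_mult norm_power
    by (intro mult_left_mono quadratic_le_norm_formula_on_disk) auto
  also have "\<dots> \<le> norm_formula a b c"
    using assms norm_formula_nonneg by (intro mult_left_le_one_le power_le_one) auto
  finally show ?thesis .
qed

lemma P2_le_norm_formula:
  assumes "cmod z1 \<le> 1" "cmod z2 \<le> 1"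
  shows "cmod (P2 a b c z1 z2) \<le> norm_formula a b c"
proof (cases "cmod z1 \<le> cmod z2")
  case True
  then show ?thesis using P2_le_norm_formula_half assms by blast
next
  case False
  then show ?thesis
    using P2_le_norm_formula_half[of z2 z1 b a c] assms
    by (simp add: P2_swap[of a b c z1 z2] norm_formula_swap)
qed

(* The bound is attained at (v, 1) with v on the circle and Re v a maximizer of g. *)
lemma P2_attains_norm_formula:
  obtains z1 z2 where "cmod z1 \<le> 1" "cmod z2 \<le> 1" "cmod (P2 a b c z1 z2) = norm_formula a b c"
proof -
  obtain x where x: "\<bar>x\<bar> \<le> 1" "circle_profile a b c x = (norm_formula a b c)^2"
    by (rule circle_profile_attains_norm_formula)
  obtain v where v: "cmod v = 1" "Re v = x"
    using unit_with_real_part[OF x(1)] .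
  have "P2 a b c v 1 = of_real a * v^2 + of_real c * v + of_real b"
    by (simp add: P2_def)
  then have "(cmod (P2 a b c v 1))^2 = (norm_formula a b c)^2"
    using norm_quadratic_on_circle[OF v(1), of a c b] v(2) x(2) by simp
  then have "cmod (P2 a b c v 1) = norm_formula a b c"
    using norm_formula_nonneg by (simp add: power2_eq_iff_nonneg)
  with v(1) show ?thesis by (intro that) auto
qed

theorem mainTheorem11:
  fixes a b c :: real
  shows "poly_norm2 (P2 a b c) =
    (if a * b \<ge> 0 \<or> \<bar>c * (a + b)\<bar> > 4 * \<bar>a * b\<bar>
     then \<bar>a + b\<bar> + \<bar>c\<bar>
     else (\<bar>a\<bar> + \<bar>b\<bar>) * sqrt (1 + c^2 / (4 * \<bar>a * b\<bar>)))"
proof -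
  obtain z1 z2 where z: "cmod z1 \<le> 1" "cmod z2 \<le> 1" "cmod (P2 a b c z1 z2) = norm_formula a b c"
    by (rule P2_attains_norm_formula)
  have "poly_norm2 (P2 a b c) = norm_formula a b c"
    unfolding poly_norm2_def
  proof (rule cSup_eq_maximum)
    show "norm_formula a b c \<in> (\<lambda>z. cmod (P2 a b c (fst z) (snd z))) `
            {z. cmod (fst z) \<le> 1 \<and> cmod (snd z) \<le> 1}"
      using z by (intro image_eqI[of _ _ "(z1, z2)"]) auto
  qed (use P2_le_norm_formula in auto)
  then show ?thesis unfolding norm_formula_def .
qed

end
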